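(* Let $D=(E,\mathcal{F})$ be a connected even normal binary delta-matroid with $E\neq\emptyset$. Then ${}^{\partial}w_{D}(z)=mz^{k}$ for some integers $m,k$ (i.e. the twist polynomial has exactly one term) if and only if the intersection graph $G_D$ is a complete graph of odd order.
   Context: A delta-matroid is a set system $(E,\mathcal{F})$, $\mathcal{F}\ne\emptyset$ a family of subsets of finite $E$, satisfying: for all $X,Y\in\mathcal{F}$ and $u\in X\Delta Y$ there is $v\in X\Delta Y$ with $X\Delta\{u,v\}\in\mathcal{F}$. Twist: $D*A=(E,\{A\Delta X:X\in\mathcal{F}\})$. Width $w(D)$ = maximum minus minimum cardinality of feasible sets; twist polynomial ${}^{\partial}w_{D}(z)=\sum_{A\subseteq E}z^{w(D*A)}$. $D$ is normal if $\emptyset\in\mathcal{F}$, and even if $|F\Delta F'|$ is even for all $F,F'\in\mathcal{F}$. The direct sum of delta-matroids on disjoint ground sets is $(E\cup E',\{F\cup F'\})$; $D$ is disconnected if it is a direct sum of two delta-matroids with nonempty ground sets, connected otherwise. For a symmetric matrix $C$ over $GF(2)$ indexed by $E$, $D(C)=(E,\{A\subseteq E: C[A]\text{ nonsingular}\})$ ($C[A]$ principal submatrix, $C[\emptyset]$ nonsingular by convention). $D$ is binary if some twist of it is isomorphic to some $D(C)$. A normal binary $D$ equals $D(C)$ for a unique symmetric $C$; its intersection graph $G_D$ has vertex set $E$, distinct $u,v$ adjacent iff $C_{u,v}=1$, and a loop at $v$ iff $C_{v,v}=1$. For even $D$, $G_D$ is a simple graph, and $D$ is connected iff $G_D$ is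 connected. *)

theory Defs
  imports "HOL-Library.Z2" "HOL-Combinatorics.Permutations"
          "HOL-Computational_Algebra.Polynomial"
begin

definition symdiff :: "'a set \<Rightarrow> 'a set \<Rightarrow> 'a set" (infixl "\<triangle>" 65) where
  "X \<triangle> Y = (X - Y) \<union> (Y - X)"

definition delta_matroid :: "'a set \<Rightarrow> 'a set set \<Rightarrow> bool" where
  "delta_matroid E F \<longleftrightarrow> finite E \<and> F \<noteq> {} \<and> (\<forall>X\<in>F. X \<subseteq> E) \<and>
     (\<forall>X\<in>F. \<forall>Y\<in>F. \<forall>u\<in>X \<triangle> Y. \<exists>v\<in>X \<triangle> Y. X \<triangle> {u, v} \<in> F)"

definition twist :: "'a set set \<Rightarrow> 'a set \<Rightarrow> 'a set set" where
  "twist F A = (\<lambda>X. A \<triangle> X) ` F"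

definition width :: "'a set set \<Rightarrow> nat" where
  "width F = Max (card ` F) - Min (card ` F)"

definition twist_poly :: "'a set \<Rightarrow> 'a set set \<Rightarrow> int poly" where
  "twist_poly E F = (\<Sum>A\<in>Pow E. monom 1 (width (twist F A)))"

definition normal :: "'a set set \<Rightarrow> bool" where
  "normal F \<longleftrightarrow> {} \<in> F"

definition even_dm :: "'a set set \<Rightarrow> bool" where
  "even_dm F \<longleftrightarrow> (\<forall>X\<in>F. \<forall>Y\<in>F. even (card (X \<triangle> Y)))"

definition direct_sum :: "'a set set \<Rightarrow> 'a set set \<Rightarrow> 'a set set" where
  "direct_sum F1 F2 = {X \<union> Y | X Y. X \<in> F1 \<and> Y \<in> F2}"

definition disconnected :: "'a set \<Rightarrow> 'a set set \<Rightarrow> bool" where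
  "disconnected E F \<longleftrightarrow> (\<exists>E1 E2 F1 F2. E1 \<noteq> {} \<and> E2 \<noteq> {} \<and> E1 \<inter> E2 = {} \<and>
      E = E1 \<union> E2 \<and> delta_matroid E1 F1 \<and> delta_matroid E2 F2 \<and> F = direct_sum F1 F2)"

definition connected_dm :: "'a set \<Rightarrow> 'a set set \<Rightarrow> bool" where
  "connected_dm E F \<longleftrightarrow> \<not> disconnected E F"

definition det_sub :: "('a \<Rightarrow> 'a \<Rightarrow> bit) \<Rightarrow> 'a set \<Rightarrow> bit" where
  "det_sub C A = (\<Sum>p | p permutes A. of_int (sign p) * (\<Prod>i\<in>A. C i (p i)))"

definition symmetric_on :: "'a set \<Rightarrow> ('a \<Rightarrow> 'a \<Rightarrow> bit) \<Rightarrow> bool" where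
  "symmetric_on E C \<longleftrightarrow> (\<forall>i\<in>E. \<forall>j\<in>E. C i j = C j i)"

definition dm_of_matrix :: "'a set \<Rightarrow> ('a \<Rightarrow> 'a \<Rightarrow> bit) \<Rightarrow> 'a set set" where
  "dm_of_matrix E C = {A. A \<subseteq> E \<and> det_sub C A \<noteq> 0}"

text \<open>Binary: some twist equals D(C) up to isomorphism; the isomorphism is absorbed
  by re-indexing C along the bijection, so C is indexed by E itself.\<close>
definition binary :: "'a set \<Rightarrow> 'a set set \<Rightarrow> bool" where
  "binary E F \<longleftrightarrow> (\<exists>A\<subseteq>E. \<exists>C. symmetric_on E C \<and> twist F A = dm_of_matrix E C)"

definition repr_matrix :: "'a set \<Rightarrow> 'a set set \<Rightarrow> ('a \<Rightarrow> 'a \<Rightarrow> bit)" where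
  "repr_matrix E F = (THE C. symmetric_on E C \<and> (\<forall>i j. (i \<notin> E \<or> j \<notin> E) \<longrightarrow> C i j = 0)
                          \<and> F = dm_of_matrix E C)"

definition ig_adj :: "'a set \<Rightarrow> 'a set set \<Rightarrow> 'a \<Rightarrow> 'a \<Rightarrow> bool" where
  "ig_adj E F u v \<longleftrightarrow> u \<in> E \<and> v \<in> E \<and> u \<noteq> v \<and> repr_matrix E F u v = 1"

definition ig_loop :: "'a set \<Rightarrow> 'a set set \<Rightarrow> 'a \<Rightarrow> bool" where
  "ig_loop E F v \<longleftrightarrow> v \<in> E \<and> repr_matrix E F v v = 1"

definition ig_complete_odd :: "'a set \<Rightarrow> 'a set set \<Rightarrow> bool" where
  "ig_complete_odd E F \<longleftrightarrow> (\<forall>v\<in>E. \<not> ig_loop E F v) \<and>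
     (\<forall>u\<in>E. \<forall>v\<in>E. u \<noteq> v \<longrightarrow> ig_adj E F u v) \<and> odd (card E)"

end

theory Submission
  imports Defs "Jordan_Normal_Form.Determinant"
begin

text \<open>
  Write D = D(C) with C symmetric over GF(2); evenness makes the diagonal of C zero. For a normal
  delta-matroid the width of the twist by A is r(A) + r(E - A), where r(S) is the largest size
  of a feasible subset of S, so the twist polynomial has a single term iff this sum does not
  depend on A. Pivoting C on a maximal feasible subset of S shows that r(S - {v}) = r(S) iff
  some kernel vector of C[S] is nonzero at v.

  If the rank sum is constant, deleting a vertex never lowers r(E), and connectedness forces
  every kernel vector of C to be constant. Hence the all-ones vector lies in the kernel, and a
  missing edge uv would produce a kernel vector vanishing at u but not at v: so G_D is complete,
  and the vanishing row sums make |E| odd. Conversely, if G_D is complete then every set of even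
  size is feasible, so r(S) = 2 floor(|S|/2) and the rank sum equals |E| - 1 when |E| is odd.
\<close>

text \<open>Z2 registers bitwise simp rules for sums and products of bits; we reason with field arithmetic.\<close>
declare add_bit_eq_xor[simp del] mult_bit_eq_and[simp del]

section \<open>Kernels of principal submatrices\<close>

definition supported_on :: "'a set \<Rightarrow> ('a \<Rightarrow> 'b::zero) \<Rightarrow> bool" where
  "supported_on T y \<longleftrightarrow> (\<forall>i. i \<notin> T \<longrightarrow> y i = 0)"

definition in_kernel :: "('a \<Rightarrow> 'a \<Rightarrow> 'b::field) \<Rightarrow> 'a set \<Rightarrow> ('a \<Rightarrow> 'b) \<Rightarrow> bool" where
  "in_kernel C T y \<longleftrightarrow> supported_on T y \<and> (\<forall>i\<in>T. (\<Sum>j\<in>T. C i j * y j) = 0)"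

definition nonsingular :: "('a \<Rightarrow> 'a \<Rightarrow> 'b::field) \<Rightarrow> 'a set \<Rightarrow> bool" where
  "nonsingular C T \<longleftrightarrow> (\<forall>y. in_kernel C T y \<longrightarrow> y = (\<lambda>_. 0))"

lemma sum_supported_on:
  fixes C :: "'a \<Rightarrow> 'a \<Rightarrow> 'b::field"
  assumes "finite S" "T \<subseteq> S" "supported_on T y"
  shows "(\<Sum>j\<in>T. C i j * y j) = (\<Sum>j\<in>S. C i j * y j)"
  by (rule sum.mono_neutral_left) (use assms in \<open>auto simp: supported_on_def\<close>)

lemma in_kernel_iff:
  assumes "finite E" "T \<subseteq> E" "supported_on E y"
  shows "in_kernel C T y \<longleftrightarrow> (\<forall>i\<in>E - T. y i = 0) \<and> (\<forall>i\<in>T. (\<Sum>j\<in>E. C i j * y j) = 0)"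
proof -
  have supp: "supported_on T y \<longleftrightarrow> (\<forall>i\<in>E - T. y i = 0)"
    using assms(3) by (auto simp: supported_on_def)
  have "(\<Sum>j\<in>T. C i j * y j) = (\<Sum>j\<in>E. C i j * y j)" if "supported_on T y" for i
    using sum_supported_on[OF assms(1,2) that] .
  with supp show ?thesis
    unfolding in_kernel_def by metis
qed

lemma nonsingular_in_kernel_zero: "nonsingular C T \<Longrightarrow> in_kernel C T y \<Longrightarrow> y i = 0"
  unfolding nonsingular_def by metis

lemma nonsingular_empty: "nonsingular C {}"
  by (auto simp: nonsingular_def in_kernel_def supported_on_def)

lemma indicator_in_kernel:
  assumes "a \<in> T" "\<forall>i\<in>T. C i a = 0"
  shows "in_kernel C T (\<lambda>i. if i = a then 1 else 0)"
  using assms by (auto simp: in_kernel_def supported_on_def if_distrib cong: if_cong)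

lemma nonsingular_singleton: "nonsingular C {a} \<longleftrightarrow> C a a \<noteq> 0"
proof
  assume "nonsingular C {a}"
  then show "C a a \<noteq> 0"
    using nonsingular_in_kernel_zero[OF _ indicator_in_kernel, of C "{a}" a a] by auto
next
  assume "C a a \<noteq> 0"
  then show "nonsingular C {a}"
    by (auto simp: nonsingular_def in_kernel_def supported_on_def fun_eq_iff)
qed

lemma nonsingular_pair:
  assumes "a \<noteq> b" "C a a = 0" "C b b = 0" "C a b = C b a"
  shows "nonsingular C {a, b} \<longleftrightarrow> C a b \<noteq> 0"
proof
  assume "nonsingular C {a, b}"
  then show "C a b \<noteq> 0"
    using nonsingular_in_kernel_zero[OF _ indicator_in_kernel, of C "{a, b}" a a] assms by auto
next
  assume "C a b \<noteq> 0"
  then show "nonsingular C {a, b}"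
    using assms by (auto simp: nonsingular_def in_kernel_def supported_on_def fun_eq_iff)
qed

lemma in_kernel_restrict:
  fixes C :: "'a \<Rightarrow> 'a \<Rightarrow> 'b::field"
  assumes "finite Z" "Z = Z1 \<union> Z2" "Z1 \<inter> Z2 = {}" "\<forall>i\<in>Z1. \<forall>j\<in>Z2. C i j = 0"
    and "in_kernel C Z y"
  shows "in_kernel C Z1 (\<lambda>i. if i \<in> Z1 then y i else 0)"
  unfolding in_kernel_def supported_on_def
proof (intro conjI allI impI ballI)
  fix i assume i: "i \<in> Z1"
  have "(\<Sum>j\<in>Z. C i j * y j) = (\<Sum>j\<in>Z1. C i j * y j) + (\<Sum>j\<in>Z2. C i j * y j)"
    using assms(1-3) by (simp add: sum.union_disjoint)
  moreover have "(\<Sum>j\<in>Z2. C i j * y j) = 0" using assms(4) i by simp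
  moreover have "(\<Sum>j\<in>Z. C i j * y j) = 0" using assms(2,5) i by (simp add: in_kernel_def)
  ultimately show "(\<Sum>j\<in>Z1. C i j * (if j \<in> Z1 then y j else 0)) = 0" by simp
qed simp

lemma in_kernel_extend:
  fixes C :: "'a \<Rightarrow> 'a \<Rightarrow> 'b::field"
  assumes Z: "finite Z" "Z' \<subseteq> Z" and zero: "\<forall>i\<in>Z - Z'. \<forall>j\<in>Z'. C i j = 0"
    and y: "in_kernel C Z' y"
  shows "in_kernel C Z y"
  unfolding in_kernel_def
proof (intro conjI ballI)
  have supp: "supported_on Z' y" using y by (simp add: in_kernel_def)
  then show "supported_on Z y" using Z(2) by (auto simp: supported_on_def)
  fix i assume i: "i \<in> Z"
  have "(\<Sum>j\<in>Z. C i j * y j) = (\<Sum>j\<in>Z'. C i j * y j)"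
    using sum_supported_on[OF Z supp] by simp
  also have "\<dots> = 0"
  proof (cases "i \<in> Z'")
    case True then show ?thesis using y by (simp add: in_kernel_def)
  next
    case False then show ?thesis using zero i by simp
  qed
  finally show "(\<Sum>j\<in>Z. C i j * y j) = 0" .
qed

lemma nonsingular_block_iff:
  fixes C :: "'a \<Rightarrow> 'a \<Rightarrow> 'b::field"
  assumes Z: "finite Z" "Z = Z1 \<union> Z2" "Z1 \<inter> Z2 = {}"
    and zero: "\<forall>i\<in>Z1. \<forall>j\<in>Z2. C i j = 0" "\<forall>i\<in>Z2. \<forall>j\<in>Z1. C i j = 0"
  shows "nonsingular C Z \<longleftrightarrow> nonsingular C Z1 \<and> nonsingular C Z2"
proof (intro iffI conjI)
  assume ns: "nonsingular C Z"
  have "Z - Z1 = Z2" "Z - Z2 = Z1" using Z(2,3) by auto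
  then show "nonsingular C Z1" "nonsingular C Z2"
    using ns in_kernel_extend[OF Z(1), of Z1 C] in_kernel_extend[OF Z(1), of Z2 C] Z(2) zero
    unfolding nonsingular_def by auto
next
  assume ns: "nonsingular C Z1 \<and> nonsingular C Z2"
  show "nonsingular C Z"
    unfolding nonsingular_def
  proof (intro allI impI ext)
    fix y i assume y: "in_kernel C Z y"
    have Z': "Z = Z2 \<union> Z1" "Z2 \<inter> Z1 = {}" using Z(2,3) by auto
    have "(if i \<in> Z1 then y i else 0) = 0"
      using nonsingular_in_kernel_zero[OF _ in_kernel_restrict[OF Z zero(1) y]] ns by blast
    moreover have "(if i \<in> Z2 then y i else 0) = 0"
      using nonsingular_in_kernel_zero[OF _ in_kernel_restrict[OF Z(1) Z' zero(2) y]] ns by blast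
    moreover have "i \<notin> Z \<Longrightarrow> y i = 0" using y by (simp add: in_kernel_def supported_on_def)
    ultimately show "y i = 0" using Z(2) by (auto split: if_splits)
  qed
qed

lemma in_kernel_delete:
  fixes C :: "'a \<Rightarrow> 'a \<Rightarrow> 'b::field"
  assumes fin: "finite T" and y: "in_kernel C T y" and yu: "y u = 0"
  shows "in_kernel C (T - {u}) y"
proof -
  have supp: "supported_on (T - {u}) y" using y yu by (auto simp: in_kernel_def supported_on_def)
  have "(\<Sum>j\<in>T - {u}. C i j * y j) = (\<Sum>j\<in>T. C i j * y j)" for i
    using sum_supported_on[OF fin _ supp] by (metis Diff_subset)
  then show ?thesis using y supp by (simp add: in_kernel_def)
qed

text \<open>For a symmetric matrix with vanishing row sums, the equation of one row is the sum of the others.\<close>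
lemma in_kernel_insert_zero_row_sums:
  fixes C :: "'a \<Rightarrow> 'a \<Rightarrow> 'b::field"
  assumes fin: "finite T" and u: "u \<in> T" and sym: "\<forall>i\<in>T. \<forall>j\<in>T. C i j = C j i"
    and rows: "\<forall>i\<in>T. (\<Sum>j\<in>T. C i j) = 0" and y: "in_kernel C (T - {u}) y"
  shows "in_kernel C T y"
proof -
  have supp': "supported_on (T - {u}) y" using y by (simp add: in_kernel_def)
  then have supp: "supported_on T y" by (auto simp: supported_on_def)
  have other_rows: "(\<Sum>j\<in>T. C i j * y j) = 0" if "i \<in> T - {u}" for i
  proof -
    have "(\<Sum>j\<in>T. C i j * y j) = (\<Sum>j\<in>T - {u}. C i j * y j)"
      using sum_supported_on[OF fin _ supp'] by (metis Diff_subset)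
    then show ?thesis using y that by (simp add: in_kernel_def)
  qed
  have "(\<Sum>i\<in>T. \<Sum>j\<in>T. C i j * y j) = (\<Sum>j\<in>T. \<Sum>i\<in>T. C i j * y j)"
    by (rule sum.swap)
  also have "\<dots> = (\<Sum>j\<in>T. (\<Sum>i\<in>T. C j i) * y j)"
    using sym by (intro sum.cong refl) (simp add: sum_distrib_right)
  also have "\<dots> = 0" using rows by simp
  finally have "(\<Sum>j\<in>T. C u j * y j) + (\<Sum>i\<in>T - {u}. \<Sum>j\<in>T. C i j * y j) = 0"
    by (simp add: sum.remove[OF fin u])
  then have "(\<Sum>j\<in>T. C u j * y j) = 0" using other_rows by simp
  then show ?thesis using supp other_rows unfolding in_kernel_def by (metis insert_Diff_single insert_iff)
qed

lemma of_int_sign_bit [simp]: "(of_int (sign p) :: bit) = 1"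
  by (simp add: sign_def)

lemma det_sub_eq_det_mat:
  assumes f: "bij_betw f {0..<n} X"
  shows "det_sub C X = det (mat n n (\<lambda>(i, j). C (f i) (f j)))"
proof -
  define M where "M = mat n n (\<lambda>(i, j). C (f i) (f j))"
  have M: "M \<in> carrier_mat n n" unfolding M_def by simp
  have gf: "inv_into {0..<n} f (f i) = i" if "i < n" for i
    using f that by (simp add: bij_betw_inv_into_left)
  have fX: "f i \<in> X" if "i < n" for i using f that by (auto simp: bij_betw_def)
  let ?conj = "\<lambda>p x. if x \<in> X then f (p (inv_into {0..<n} f x)) else x"
  have "det_sub C X = (\<Sum>q | q permutes X. \<Prod>x\<in>X. C x (q x))"
    unfolding det_sub_def by simp
  also have "\<dots> = (\<Sum>p | p permutes {0..<n}. \<Prod>x\<in>X. C x (?conj p x))"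
    by (rule sum.reindex_bij_betw[OF bij_betw_permutations[OF f], symmetric])
  also have "\<dots> = (\<Sum>p | p permutes {0..<n}. \<Prod>i\<in>{0..<n}. C (f i) (?conj p (f i)))"
    by (intro sum.cong refl prod.reindex_bij_betw[OF f, symmetric])
  also have "\<dots> = (\<Sum>p | p permutes {0..<n}. \<Prod>i\<in>{0..<n}. M $$ (i, p i))"
  proof (intro sum.cong refl prod.cong)
    fix p i assume p: "p \<in> {p. p permutes {0..<n}}" and i: "i \<in> {0..<n}"
    have "p i < n" using p i permutes_in_image by fastforce
    then show "C (f i) (?conj p (f i)) = M $$ (i, p i)"
      using i fX gf unfolding M_def by auto
  qed
  also have "\<dots> = det M" unfolding det_def'[OF M] by simp
  finally show ?thesis unfolding M_def .
qed

lemma nonsingular_iff_det_mat: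
  fixes C :: "'a \<Rightarrow> 'a \<Rightarrow> 'b::field"
  assumes f: "bij_betw f {0..<n} X"
  shows "nonsingular C X \<longleftrightarrow> det (mat n n (\<lambda>(i, j). C (f i) (f j))) \<noteq> 0"
proof -
  define M where "M = mat n n (\<lambda>(i, j). C (f i) (f j))"
  define g where "g = inv_into {0..<n} f"
  have gf: "g (f i) = i" if "i < n" for i
    using f that unfolding g_def by (simp add: bij_betw_inv_into_left)
  have fg: "f (g x) = x" "g x < n" if "x \<in> X" for x
    using f that unfolding g_def by (auto simp: bij_betw_inv_into_right bij_betw_def inv_into_into)
  have fX: "f i \<in> X" if "i < n" for i using f that by (auto simp: bij_betw_def)
  have Mv: "(M *\<^sub>v vec n (\<lambda>i. y (f i))) $ i = (\<Sum>j\<in>X. C (f i) j * y j)" if "i < n" for y i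
    using that sum.reindex_bij_betw[OF f, of "\<lambda>j. C (f i) j * y j"]
    by (simp add: M_def scalar_prod_def)
  have "nonsingular C X \<longleftrightarrow> (\<forall>v\<in>carrier_vec n. M *\<^sub>v v = 0\<^sub>v n \<longrightarrow> v = 0\<^sub>v n)"
  proof (intro iffI ballI impI)
    fix v assume ns: "nonsingular C X" and v: "v \<in> carrier_vec n" "M *\<^sub>v v = 0\<^sub>v n"
    define y where "y = (\<lambda>x. if x \<in> X then v $ g x else 0)"
    have vy: "v = vec n (\<lambda>i. y (f i))" using v(1) by (auto simp: y_def fX gf)
    have "in_kernel C X y"
      unfolding in_kernel_def supported_on_def
    proof (intro conjI allI impI ballI)
      fix x assume x: "x \<in> X"
      show "(\<Sum>j\<in>X. C x j * y j) = 0"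
        using Mv[of "g x" y] v(2) fg[OF x] vy by simp
    qed (simp add: y_def)
    then show "v = 0\<^sub>v n"
      using nonsingular_in_kernel_zero[OF ns] vy by auto
  next
    assume inj: "\<forall>v\<in>carrier_vec n. M *\<^sub>v v = 0\<^sub>v n \<longrightarrow> v = 0\<^sub>v n"
    show "nonsingular C X"
      unfolding nonsingular_def
    proof (intro allI impI ext)
      fix y x assume y: "in_kernel C X y"
      have "M *\<^sub>v vec n (\<lambda>i. y (f i)) = 0\<^sub>v n"
      proof (rule eq_vecI)
        fix i assume "i < dim_vec (0\<^sub>v n)"
        then show "(M *\<^sub>v vec n (\<lambda>i. y (f i))) $ i = 0\<^sub>v n $ i"
          using Mv y fX by (simp add: in_kernel_def)
      qed (simp add: M_def)
      then have "vec n (\<lambda>i. y (f i)) = 0\<^sub>v n" using inj by simp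
      then show "y x = 0"
        using y fg[of x] by (cases "x \<in> X") (auto simp: in_kernel_def supported_on_def dest: arg_cong[of _ _ "\<lambda>v. v $ g x"])
    qed
  qed
  also have "\<dots> \<longleftrightarrow> det M \<noteq> 0"
    using det_0_iff_vec_prod_zero[of M n] by (auto simp: M_def)
  finally show ?thesis unfolding M_def .
qed

lemma det_sub_nonzero_iff_nonsingular:
  assumes "finite X"
  shows "det_sub C X \<noteq> 0 \<longleftrightarrow> nonsingular C X"
proof -
  obtain f where "bij_betw f {0..<card X} X" using ex_bij_betw_nat_finite[OF assms] by blast
  then show ?thesis using det_sub_eq_det_mat nonsingular_iff_det_mat by metis
qed

lemma dm_of_matrix_eq: "finite E \<Longrightarrow> dm_of_matrix E C = {Z. Z \<subseteq> E \<and> nonsingular C Z}"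
  unfolding dm_of_matrix_def using det_sub_nonzero_iff_nonsingular finite_subset by blast

section \<open>Principal pivoting over GF(2)\<close>

lemma bit_add_eq_0_iff: "(a::bit) + b = 0 \<longleftrightarrow> a = b"
  by (cases a; cases b) (simp_all add: add_bit_eq_xor)

lemma of_nat_bit: "(of_nat n :: bit) = (if even n then 0 else 1)"
  by (induction n) (auto simp: add_bit_eq_xor)

definition vadd :: "('a \<Rightarrow> bit) \<Rightarrow> ('a \<Rightarrow> bit) \<Rightarrow> 'a \<Rightarrow> bit" where
  "vadd x y = (\<lambda>i. x i + y i)"

lemma vadd_eq_0_iff: "vadd x y = (\<lambda>_. 0) \<longleftrightarrow> x = y"
  unfolding vadd_def by (auto simp: fun_eq_iff bit_add_eq_0_iff)

text \<open>
  Writing y = C x, the pivot is the matrix sending the vector that agrees with y on A and with x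
  off A (pivot_arg x) to the vector that agrees with x on A and with y off A (pivot_val x).
\<close>
locale pivot =
  fixes E :: "'a set" and C :: "'a \<Rightarrow> 'a \<Rightarrow> bit" and A :: "'a set"
  assumes fin: "finite E" and sym: "symmetric_on E C" and A_sub: "A \<subseteq> E"
    and nonsingular_A: "nonsingular C A"
begin

definition vecs :: "('a \<Rightarrow> bit) set" where
  "vecs = {x. supported_on E x}"

definition matvec :: "('a \<Rightarrow> bit) \<Rightarrow> 'a \<Rightarrow> bit" where
  "matvec x = (\<lambda>i. if i \<in> E then (\<Sum>j\<in>E. C i j * x j) else 0)"

definition pivot_arg :: "('a \<Rightarrow> bit) \<Rightarrow> 'a \<Rightarrow> bit" where
  "pivot_arg x = (\<lambda>i. if i \<in> A then matvec x i else x i)"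

definition pivot_val :: "('a \<Rightarrow> bit) \<Rightarrow> 'a \<Rightarrow> bit" where
  "pivot_val x = (\<lambda>i. if i \<in> A then x i else matvec x i)"

lemma finite_vecs: "finite vecs"
proof -
  have "finite (UNIV :: bit set)"
    by (metis (full_types) UNIV_eq_I bit_not_zero_iff finite.emptyI finite_insert insertCI)
  then have "finite {x :: 'a \<Rightarrow> bit. \<forall>i. (i \<in> E \<longrightarrow> x i \<in> UNIV) \<and> (i \<notin> E \<longrightarrow> x i = 0)}"
    by (rule finite_set_of_finite_funs[OF fin])
  then show ?thesis by (simp add: vecs_def supported_on_def)
qed

lemma zero_vecs: "(\<lambda>_. 0) \<in> vecs"
  by (simp add: vecs_def supported_on_def)

lemma vadd_vecs: "x \<in> vecs \<Longrightarrow> y \<in> vecs \<Longrightarrow> vadd x y \<in> vecs"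
  by (simp add: vecs_def supported_on_def vadd_def)

lemma matvec_add: "matvec (vadd x y) = vadd (matvec x) (matvec y)"
  unfolding matvec_def vadd_def by (auto simp: distrib_left sum.distrib)

lemma pivot_arg_add: "pivot_arg (vadd x y) = vadd (pivot_arg x) (pivot_arg y)"
  using matvec_add by (auto simp: pivot_arg_def vadd_def fun_eq_iff)

lemma pivot_val_add: "pivot_val (vadd x y) = vadd (pivot_val x) (pivot_val y)"
  using matvec_add by (auto simp: pivot_val_def vadd_def fun_eq_iff)

lemma pivot_arg_vecs: "x \<in> vecs \<Longrightarrow> pivot_arg x \<in> vecs"
  using A_sub by (auto simp: pivot_arg_def vecs_def supported_on_def)

lemma matvec_zero: "matvec (\<lambda>_. 0) = (\<lambda>_. 0)"
  by (simp add: matvec_def fun_eq_iff)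

lemma pivot_arg_zero: "pivot_arg (\<lambda>_. 0) = (\<lambda>_. 0)"
  by (simp add: pivot_arg_def matvec_zero fun_eq_iff)

lemma pivot_arg_outside: "i \<notin> A \<Longrightarrow> pivot_arg x i = x i"
  by (simp add: pivot_arg_def)

lemma pivot_arg_zero_imp_zero:
  assumes px: "pivot_arg x = (\<lambda>_. 0)"
  shows "x = (\<lambda>_. 0)"
proof -
  have supp: "supported_on A x"
    unfolding supported_on_def
  proof (intro allI impI)
    fix i assume "i \<notin> A"
    then have "x i = pivot_arg x i" by (simp add: pivot_arg_def)
    then show "x i = 0" using px by simp
  qed
  have "(\<Sum>j\<in>A. C i j * x j) = 0" if i: "i \<in> A" for i
  proof -
    have "(\<Sum>j\<in>A. C i j * x j) = (\<Sum>j\<in>E. C i j * x j)"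
      by (rule sum_supported_on[OF fin A_sub supp])
    also have "\<dots> = pivot_arg x i" using i A_sub by (auto simp: pivot_arg_def matvec_def)
    finally show ?thesis using px by simp
  qed
  then have "in_kernel C A x" using supp by (simp add: in_kernel_def)
  then show ?thesis using nonsingular_A by (simp add: nonsingular_def)
qed

lemma bij_betw_pivot_arg: "bij_betw pivot_arg vecs vecs"
proof -
  have inj: "inj_on pivot_arg vecs"
  proof (rule inj_onI)
    fix x y assume "pivot_arg x = pivot_arg y"
    then have "pivot_arg (vadd x y) = (\<lambda>_. 0)" by (simp add: pivot_arg_add vadd_eq_0_iff)
    then have "vadd x y = (\<lambda>_. 0)" by (rule pivot_arg_zero_imp_zero)
    then show "x = y" by (simp add: vadd_eq_0_iff)
  qed
  moreover have "pivot_arg ` vecs = vecs"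
    using endo_inj_surj[OF finite_vecs _ inj] pivot_arg_vecs by blast
  ultimately show ?thesis by (simp add: bij_betw_def)
qed

definition pivot_arg_inv :: "('a \<Rightarrow> bit) \<Rightarrow> 'a \<Rightarrow> bit" where
  "pivot_arg_inv = inv_into vecs pivot_arg"

lemma pivot_arg_inv_vecs: "y \<in> vecs \<Longrightarrow> pivot_arg_inv y \<in> vecs"
  unfolding pivot_arg_inv_def by (rule bij_betw_apply[OF bij_betw_inv_into[OF bij_betw_pivot_arg]])

lemma pivot_arg_inv_inverse: "y \<in> vecs \<Longrightarrow> pivot_arg (pivot_arg_inv y) = y"
  unfolding pivot_arg_inv_def by (rule bij_betw_inv_into_right[OF bij_betw_pivot_arg])

lemma pivot_arg_inverse: "x \<in> vecs \<Longrightarrow> pivot_arg_inv (pivot_arg x) = x"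
  unfolding pivot_arg_inv_def by (rule bij_betw_inv_into_left[OF bij_betw_pivot_arg])

lemma pivot_arg_inv_add:
  assumes "x \<in> vecs" "y \<in> vecs"
  shows "pivot_arg_inv (vadd x y) = vadd (pivot_arg_inv x) (pivot_arg_inv y)"
proof -
  have "vadd x y = pivot_arg (vadd (pivot_arg_inv x) (pivot_arg_inv y))"
    using assms by (simp add: pivot_arg_add pivot_arg_inv_inverse)
  then show ?thesis
    using pivot_arg_inverse[OF vadd_vecs[OF pivot_arg_inv_vecs pivot_arg_inv_vecs]] assms by simp
qed

definition unit_vec :: "'a \<Rightarrow> 'a \<Rightarrow> bit" where
  "unit_vec j = (\<lambda>i. if i = j then 1 else 0)"

lemma unit_vec_vecs: "j \<in> E \<Longrightarrow> unit_vec j \<in> vecs"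
  by (simp add: unit_vec_def vecs_def supported_on_def)

definition pivot_map :: "('a \<Rightarrow> bit) \<Rightarrow> 'a \<Rightarrow> bit" where
  "pivot_map y = pivot_val (pivot_arg_inv y)"

definition pivot_matrix :: "'a \<Rightarrow> 'a \<Rightarrow> bit" where
  "pivot_matrix i j = (if i \<in> E \<and> j \<in> E then pivot_map (unit_vec j) i else 0)"

lemma pivot_map_zero: "pivot_map (\<lambda>_. 0) = (\<lambda>_. 0)"
proof -
  have "pivot_arg_inv (\<lambda>_. 0) = (\<lambda>_. 0)" using pivot_arg_inverse[OF zero_vecs] pivot_arg_zero by simp
  then have "pivot_map (\<lambda>_. 0) = pivot_val (\<lambda>_. 0)" by (simp add: pivot_map_def)
  also have "\<dots> = (\<lambda>_. 0)" by (simp add: pivot_val_def matvec_zero fun_eq_iff)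
  finally show ?thesis .
qed

lemma pivot_map_add:
  "x \<in> vecs \<Longrightarrow> y \<in> vecs \<Longrightarrow> pivot_map (vadd x y) = vadd (pivot_map x) (pivot_map y)"
  unfolding pivot_map_def by (simp add: pivot_arg_inv_add pivot_val_add)

lemma pivot_map_expand:
  assumes "S \<subseteq> E" "supported_on S x"
  shows "pivot_map x i = (\<Sum>j\<in>S. x j * pivot_map (unit_vec j) i)"
  using finite_subset[OF assms(1) fin] assms
proof (induction S arbitrary: x rule: finite_induct)
  case empty
  then have "x = (\<lambda>_. 0)" by (auto simp: supported_on_def)
  then show ?case using pivot_map_zero by simp
next
  case (insert s S)
  define x' where "x' = x(s := 0)"
  have x': "supported_on S x'" "x' \<in> vecs"
    using insert.prems unfolding x'_def vecs_def supported_on_def by auto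
  have IH: "pivot_map x' i = (\<Sum>j\<in>S. x j * pivot_map (unit_vec j) i)"
    using insert x' by (auto simp: x'_def intro!: sum.cong)
  show ?case
  proof (cases "x s = 0")
    case True
    then have "x = x'" by (auto simp: x'_def)
    then show ?thesis using IH True insert.hyps by simp
  next
    case False
    then have "x = vadd x' (unit_vec s)" by (auto simp: x'_def vadd_def unit_vec_def fun_eq_iff)
    then have "pivot_map x i = pivot_map x' i + pivot_map (unit_vec s) i"
      using pivot_map_add x'(2) unit_vec_vecs insert.prems by (metis insert_subset vadd_def)
    then show ?thesis using IH False insert.hyps by (simp add: add.commute)
  qed
qed

lemma pivot_matrix_mult:
  assumes "x \<in> vecs" "i \<in> E"
  shows "(\<Sum>j\<in>E. pivot_matrix i j * pivot_arg x j) = pivot_val x i"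
proof -
  have "pivot_val x i = pivot_map (pivot_arg x) i"
    using pivot_arg_inverse[OF assms(1)] by (simp add: pivot_map_def)
  also have "\<dots> = (\<Sum>j\<in>E. pivot_arg x j * pivot_map (unit_vec j) i)"
    using pivot_map_expand pivot_arg_vecs[OF assms(1)] by (simp add: vecs_def)
  also have "\<dots> = (\<Sum>j\<in>E. pivot_matrix i j * pivot_arg x j)"
    using assms(2) by (intro sum.cong) (auto simp: pivot_matrix_def mult.commute)
  finally show ?thesis by simp
qed

definition dot :: "('a \<Rightarrow> bit) \<Rightarrow> ('a \<Rightarrow> bit) \<Rightarrow> bit" where
  "dot x y = (\<Sum>k\<in>E. x k * y k)"

lemma dot_matvec_commute: "dot x (matvec y) = dot y (matvec x)"
proof -
  have "dot x (matvec y) = (\<Sum>k\<in>E. \<Sum>j\<in>E. x k * C k j * y j)"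
    unfolding dot_def matvec_def by (simp add: sum_distrib_left mult.assoc)
  also have "\<dots> = (\<Sum>j\<in>E. \<Sum>k\<in>E. x k * C k j * y j)" by (rule sum.swap)
  also have "\<dots> = (\<Sum>j\<in>E. \<Sum>k\<in>E. y j * C j k * x k)"
    using sym unfolding symmetric_on_def
    by (intro sum.cong refl) (simp add: mult.commute mult.left_commute)
  also have "\<dots> = dot y (matvec x)"
    unfolding dot_def matvec_def by (simp add: sum_distrib_left mult.assoc)
  finally show ?thesis .
qed

text \<open>
  The sum of the two sides is dot x (matvec y) + dot y (matvec x), which vanishes in characteristic 2;
  this is what makes the pivot symmetric.
\<close>
lemma dot_pivot_arg_val_commute: "dot (pivot_arg y) (pivot_val x) = dot (pivot_arg x) (pivot_val y)"
proof -
  have "dot (pivot_arg y) (pivot_val x) + dot (pivot_arg x) (pivot_val y)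
      = dot x (matvec y) + dot y (matvec x)"
    unfolding dot_def pivot_arg_def pivot_val_def
    by (simp add: sum.distrib[symmetric]) (rule sum.cong, auto simp: mult.commute add.commute)
  also have "\<dots> = 0" using dot_matvec_commute by (simp add: bit_add_eq_0_iff)
  finally show ?thesis by (simp add: bit_add_eq_0_iff)
qed

lemma dot_unit_vec:
  assumes "i \<in> E"
  shows "dot (unit_vec i) y = y i"
proof -
  have "dot (unit_vec i) y = (\<Sum>k\<in>E. if k = i then y k else 0)"
    unfolding dot_def unit_vec_def by (rule sum.cong) auto
  also have "\<dots> = y i" using assms fin by simp
  finally show ?thesis .
qed

lemma pivot_matrix_symmetric: "pivot_matrix i j = pivot_matrix j i"
proof (cases "i \<in> E \<and> j \<in> E")
  case True
  define x where "x = pivot_arg_inv (unit_vec j)"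
  define y where "y = pivot_arg_inv (unit_vec i)"
  have "pivot_arg x = unit_vec j" "pivot_arg y = unit_vec i"
    using True pivot_arg_inv_inverse unit_vec_vecs by (auto simp: x_def y_def)
  then show ?thesis
    using True dot_pivot_arg_val_commute[of y x]
    by (simp add: pivot_matrix_def dot_unit_vec pivot_map_def x_def y_def)
next
  case False
  then show ?thesis by (auto simp: pivot_matrix_def)
qed

lemma in_kernel_pivot_iff:
  assumes x: "x \<in> vecs" and Y: "Y \<subseteq> E"
  shows "in_kernel C Y x \<longleftrightarrow> in_kernel pivot_matrix (A \<triangle> Y) (pivot_arg x)"
proof -
  have AY: "A \<triangle> Y \<subseteq> E" using A_sub Y by (auto simp: symdiff_def)
  have "in_kernel C Y x \<longleftrightarrow> (\<forall>i\<in>E - Y. x i = 0) \<and> (\<forall>i\<in>Y. matvec x i = 0)"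
  proof -
    have "matvec x i = (\<Sum>j\<in>E. C i j * x j)" if "i \<in> Y" for i
      using that Y by (auto simp: matvec_def)
    then show ?thesis using in_kernel_iff[OF fin Y, of x C] x by (simp add: vecs_def)
  qed
  also have "\<dots> \<longleftrightarrow> (\<forall>i\<in>E - (A \<triangle> Y). pivot_arg x i = 0) \<and> (\<forall>i\<in>A \<triangle> Y. pivot_val x i = 0)"
    using A_sub Y by (auto simp: pivot_arg_def pivot_val_def symdiff_def)
  also have "\<dots> \<longleftrightarrow> in_kernel pivot_matrix (A \<triangle> Y) (pivot_arg x)"
  proof -
    have "(\<Sum>j\<in>E. pivot_matrix i j * pivot_arg x j) = pivot_val x i" if "i \<in> A \<triangle> Y" for i
      using pivot_matrix_mult[OF x] AY that by blast
    then show ?thesis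
      using in_kernel_iff[OF fin AY, of "pivot_arg x" pivot_matrix] pivot_arg_vecs[OF x]
      by (simp add: vecs_def)
  qed
  finally show ?thesis .
qed

lemma in_kernel_vecs: "in_kernel M T y \<Longrightarrow> T \<subseteq> E \<Longrightarrow> y \<in> vecs"
  by (auto simp: in_kernel_def vecs_def supported_on_def)

lemma nonsingular_pivot_iff:
  assumes Z: "Z \<subseteq> E"
  shows "nonsingular pivot_matrix Z \<longleftrightarrow> nonsingular C (A \<triangle> Z)"
proof -
  have AZ: "A \<triangle> Z \<subseteq> E" and AAZ: "A \<triangle> (A \<triangle> Z) = Z"
    using A_sub Z by (auto simp: symdiff_def)
  show ?thesis
  proof
    assume ns: "nonsingular pivot_matrix Z"
    show "nonsingular C (A \<triangle> Z)"
      unfolding nonsingular_def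
    proof (intro allI impI)
      fix x assume k: "in_kernel C (A \<triangle> Z) x"
      then have x: "x \<in> vecs" using in_kernel_vecs AZ by blast
      have "in_kernel pivot_matrix Z (pivot_arg x)"
        using k in_kernel_pivot_iff[OF x AZ] AAZ by simp
      then show "x = (\<lambda>_. 0)"
        using ns pivot_arg_zero_imp_zero by (simp add: nonsingular_def)
    qed
  next
    assume ns: "nonsingular C (A \<triangle> Z)"
    show "nonsingular pivot_matrix Z"
      unfolding nonsingular_def
    proof (intro allI impI)
      fix y assume k: "in_kernel pivot_matrix Z y"
      then have y: "y \<in> vecs" using in_kernel_vecs Z by blast
      then have "in_kernel C (A \<triangle> Z) (pivot_arg_inv y)"
        using k in_kernel_pivot_iff[OF pivot_arg_inv_vecs[OF y] AZ] AAZ pivot_arg_inv_inverse[OF y]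
        by simp
      then have "pivot_arg_inv y = (\<lambda>_. 0)" using ns by (simp add: nonsingular_def)
      then show "y = (\<lambda>_. 0)" using pivot_arg_inv_inverse[OF y] pivot_arg_zero by metis
    qed
  qed
qed

end

section \<open>Normal binary delta-matroids as matrix delta-matroids\<close>

lemma symdiff_symdiff_cancel [simp]: "A \<triangle> (A \<triangle> Z) = Z"
  by (auto simp: symdiff_def)

lemma twist_mem_iff: "Y \<in> twist F A \<longleftrightarrow> A \<triangle> Y \<in> F"
  unfolding twist_def image_iff by (metis symdiff_symdiff_cancel)

lemma normal_binary_representation:
  assumes dm: "delta_matroid E F" and normal: "normal F" and binary: "binary E F"
  obtains C where "symmetric_on E C" "\<forall>i j. i \<notin> E \<or> j \<notin> E \<longrightarrow> C i j = 0"
    "F = {Z. Z \<subseteq> E \<and> nonsingular C Z}"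
proof -
  have fin: "finite E" and FE: "\<forall>X\<in>F. X \<subseteq> E" using dm by (auto simp: delta_matroid_def)
  obtain A C where A: "A \<subseteq> E" and sym: "symmetric_on E C"
    and tw: "twist F A = {Z. Z \<subseteq> E \<and> nonsingular C Z}"
    using binary dm_of_matrix_eq[OF fin] by (auto simp: binary_def)
  have "A \<in> twist F A" using normal by (simp add: twist_mem_iff normal_def symdiff_def)
  then have "nonsingular C A" using tw by simp
  then interpret pivot E C A using fin sym A by unfold_locales
  have "Z \<in> F \<longleftrightarrow> Z \<subseteq> E \<and> nonsingular pivot_matrix Z" for Z
  proof -
    have "Z \<in> F \<longleftrightarrow> Z \<subseteq> E \<and> A \<triangle> Z \<in> twist F A"
      using FE by (auto simp: twist_mem_iff)
    also have "\<dots> \<longleftrightarrow> Z \<subseteq> E \<and> nonsingular pivot_matrix Z"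
      using tw A nonsingular_pivot_iff by (auto simp: symdiff_def)
    finally show ?thesis .
  qed
  moreover have "symmetric_on E pivot_matrix"
    using pivot_matrix_symmetric by (simp add: symmetric_on_def)
  moreover have "\<forall>i j. i \<notin> E \<or> j \<notin> E \<longrightarrow> pivot_matrix i j = 0"
    by (simp add: pivot_matrix_def)
  ultimately show thesis using that[of pivot_matrix] by blast
qed

section \<open>Widths of twists\<close>

definition feasible_rank :: "'a set set \<Rightarrow> 'a set \<Rightarrow> nat" where
  "feasible_rank F S = Max (card ` {X \<in> F. X \<subseteq> S})"

lemma delta_matroid_finite: "delta_matroid E F \<Longrightarrow> finite F"
  unfolding delta_matroid_def by (meson Pow_iff finite_Pow_iff rev_finite_subset subsetI)

lemma card_le_feasible_rank:
  assumes "finite F" "X \<in> F" "X \<subseteq> S"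
  shows "card X \<le> feasible_rank F S"
  unfolding feasible_rank_def using assms by (intro Max_ge) auto

lemma obtain_feasible_subset_of_rank:
  assumes "finite F" "{} \<in> F"
  obtains X where "X \<in> F" "X \<subseteq> S" "card X = feasible_rank F S"
proof -
  have "feasible_rank F S \<in> card ` {X \<in> F. X \<subseteq> S}"
    unfolding feasible_rank_def using assms by (intro Max_in) auto
  then show ?thesis using that by auto
qed

text \<open>
  Exchanging a feasible set X with the empty set at an element of X outside A removes that
  element together with at most one element of X \<inter> A; iterate until X \<subseteq> A.
\<close>
lemma exists_feasible_subset_card_ge:
  assumes dm: "delta_matroid E F" and empty: "{} \<in> F" and X: "X \<in> F"
  shows "\<exists>Y\<in>F. Y \<subseteq> A \<and> card (X \<inter> A) \<le> card Y + card (X - A)"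
  using X
proof (induction "card (X - A)" arbitrary: X rule: less_induct)
  case less
  have "finite E" "X \<subseteq> E" using dm less.prems by (auto simp: delta_matroid_def)
  then have fX: "finite X" by (rule finite_subset[rotated])
  show ?case
  proof (cases "X \<subseteq> A")
    case True
    then show ?thesis using less.prems by (intro bexI[of _ X]) (auto simp: Int_absorb2)
  next
    case False
    then obtain u where u: "u \<in> X" "u \<notin> A" by auto
    then have "u \<in> X \<triangle> {}" by (simp add: symdiff_def)
    then obtain v where v: "v \<in> X \<triangle> {}" "X \<triangle> {u, v} \<in> F"
      using dm less.prems empty unfolding delta_matroid_def by blast
    have vX: "v \<in> X" using v(1) by (simp add: symdiff_def)
    define X' where "X' = X - {u, v}"
    have X'F: "X' \<in> F" using v(2) u vX by (simp add: X'_def symdiff_def insert_absorb Un_absorb2)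
    have lt: "card (X' - A) < card (X - A)"
      unfolding X'_def using u fX by (intro psubset_card_mono) auto
    obtain Y where Y: "Y \<in> F" "Y \<subseteq> A" "card (X' \<inter> A) \<le> card Y + card (X' - A)"
      using less.hyps[OF lt X'F] by blast
    have "card (X \<inter> A) + card (X' - A) \<le> card (X' \<inter> A) + card (X - A)"
    proof (cases "v \<in> A")
      case True
      have "X' \<inter> A = (X \<inter> A) - {v}" "X' - A = (X - A) - {u}"
        unfolding X'_def using u True by auto
      moreover have "card (X \<inter> A) > 0" "card (X - A) > 0"
        using True vX u fX by (auto simp: card_gt_0_iff)
      ultimately show ?thesis using True vX u fX by (simp add: card_Diff_singleton)
    next
      case False
      have "X' \<inter> A = X \<inter> A" unfolding X'_def using u False by auto
      moreover have "X' - A \<subseteq> X - A" unfolding X'_def by auto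
      ultimately show ?thesis using fX by (simp add: card_mono)
    qed
    then show ?thesis using Y by (intro bexI[of _ Y]) auto
  qed
qed

lemma card_symdiff_add_card_inter:
  assumes "finite A" "finite X"
  shows "card (A \<triangle> X) + card (A \<inter> X) = card A + card (X - A)"
proof -
  have "card (A \<triangle> X) = card (A - X) + card (X - A)"
    unfolding symdiff_def using assms by (intro card_Un_disjoint) auto
  moreover have "card A = card (A - X) + card (A \<inter> X)"
    using assms by (metis Diff_Diff_Int card_Diff_subset_Int card_mono inf_le1 le_add_diff_inverse2 finite_Diff)
  ultimately show ?thesis by simp
qed

lemma card_le_card_symdiff_add_feasible_rank:
  assumes dm: "delta_matroid E F" and empty: "{} \<in> F" and A: "A \<subseteq> E" and X: "X \<in> F"
  shows "card A \<le> card (A \<triangle> X) + feasible_rank F A"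
proof -
  have "finite E" "X \<subseteq> E" using dm X by (auto simp: delta_matroid_def)
  then have fin: "finite A" "finite X" using A by (auto intro: finite_subset)
  obtain Y where Y: "Y \<in> F" "Y \<subseteq> A" "card (X \<inter> A) \<le> card Y + card (X - A)"
    using exists_feasible_subset_card_ge[OF dm empty X] by blast
  have "card Y \<le> feasible_rank F A"
    using card_le_feasible_rank[OF delta_matroid_finite[OF dm] Y(1,2)] .
  then show ?thesis
    using Y(3) card_symdiff_add_card_inter[OF fin] by (simp add: Int_commute)
qed

lemma card_symdiff_add_card_symdiff_compl:
  assumes "finite E" "A \<subseteq> E" "X \<subseteq> E"
  shows "card (A \<triangle> X) + card ((E - A) \<triangle> X) = card E"
proof -
  have "(E - A) \<triangle> X = E - (A \<triangle> X)" "A \<triangle> X \<subseteq> E" using assms by (auto simp: symdiff_def)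
  then show ?thesis using assms by (metis card_Diff_subset finite_subset le_add_diff_inverse card_mono)
qed

lemma sum_monom_eq_monom_iff:
  fixes f :: "'b \<Rightarrow> nat"
  assumes "finite P"
  shows "(\<exists>(m::int) k. (\<Sum>x\<in>P. monom 1 (f x)) = monom m k) \<longleftrightarrow> (\<exists>k. \<forall>x\<in>P. f x = k)"
proof
  assume "\<exists>(m::int) k. (\<Sum>x\<in>P. monom 1 (f x)) = monom m k"
  then obtain m :: int and k where e: "(\<Sum>x\<in>P. monom 1 (f x)) = monom m k" by blast
  have "f x = k" if x: "x \<in> P" for x
  proof (rule ccontr)
    assume ne: "f x \<noteq> k"
    have "coeff (\<Sum>x\<in>P. monom (1::int) (f x)) (f x) = int (card (P \<inter> {y. f y = f x}))"
      using assms by (simp add: coeff_sum sum.If_cases)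
    also have "\<dots> > 0" using x assms by (auto simp: card_gt_0_iff)
    finally show False using e ne by simp
  qed
  then show "\<exists>k. \<forall>x\<in>P. f x = k" by blast
next
  assume "\<exists>k. \<forall>x\<in>P. f x = k"
  then obtain k where "\<forall>x\<in>P. f x = k" by blast
  then have "(\<Sum>x\<in>P. monom (1::int) (f x)) = (\<Sum>x\<in>P. monom 1 k)" by simp
  also have "\<dots> = monom (\<Sum>x\<in>P. 1) k" by (rule monom_sum[symmetric])
  finally show "\<exists>(m::int) k. (\<Sum>x\<in>P. monom 1 (f x)) = monom m k" by blast
qed

locale normal_delta_matroid =
  fixes E :: "'a set" and F :: "'a set set"
  assumes dm: "delta_matroid E F" and empty_feasible: "{} \<in> F"
begin

lemma finite_ground: "finite E"
  using dm by (simp add: delta_matroid_def)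

lemma finite_subset_ground: "S \<subseteq> E \<Longrightarrow> finite S"
  using finite_ground by (rule rev_finite_subset)

lemma feasible_sub: "X \<in> F \<Longrightarrow> X \<subseteq> E"
  using dm by (simp add: delta_matroid_def)

lemma finite_feasible: "finite F"
  using delta_matroid_finite[OF dm] .

lemma Min_card_twist:
  assumes A: "A \<subseteq> E"
  shows "Min (card ` twist F A) = card A - feasible_rank F A"
proof (rule Min_eqI)
  show "finite (card ` twist F A)" using finite_feasible by (simp add: twist_def)
  fix s assume "s \<in> card ` twist F A"
  then obtain X where "X \<in> F" "s = card (A \<triangle> X)" by (auto simp: twist_def)
  then show "card A - feasible_rank F A \<le> s"
    using card_le_card_symdiff_add_feasible_rank[OF dm empty_feasible A] by fastforce
next
  obtain Y where Y: "Y \<in> F" "Y \<subseteq> A" "card Y = feasible_rank F A"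
    using obtain_feasible_subset_of_rank[OF finite_feasible empty_feasible] by blast
  have "A \<triangle> Y = A - Y" using Y(2) by (auto simp: symdiff_def)
  then have "card (A \<triangle> Y) = card A - feasible_rank F A"
    using Y finite_subset_ground[OF A] by (simp add: card_Diff_subset finite_subset)
  then show "card A - feasible_rank F A \<in> card ` twist F A"
    using Y(1) by (force simp: twist_def)
qed

lemma Max_card_twist:
  assumes A: "A \<subseteq> E"
  shows "Max (card ` twist F A) = card A + feasible_rank F (E - A)"
proof (rule Max_eqI)
  show "finite (card ` twist F A)" using finite_feasible by (simp add: twist_def)
  have EA: "card E = card A + card (E - A)"
    using card_Int_Diff[OF finite_ground, of A] A by (simp add: Int_absorb1)
  fix s assume "s \<in> card ` twist F A"
  then obtain X where X: "X \<in> F" "s = card (A \<triangle> X)" by (auto simp: twist_def)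
  have "card (E - A) \<le> card ((E - A) \<triangle> X) + feasible_rank F (E - A)"
    using card_le_card_symdiff_add_feasible_rank[OF dm empty_feasible _ X(1)] by blast
  then show "s \<le> card A + feasible_rank F (E - A)"
    using card_symdiff_add_card_symdiff_compl[OF finite_ground A feasible_sub[OF X(1)]] EA X(2)
    by linarith
next
  obtain Y where Y: "Y \<in> F" "Y \<subseteq> E - A" "card Y = feasible_rank F (E - A)"
    using obtain_feasible_subset_of_rank[OF finite_feasible empty_feasible] by blast
  have "A \<triangle> Y = A \<union> Y" "A \<inter> Y = {}" using Y(2) by (auto simp: symdiff_def)
  then have "card (A \<triangle> Y) = card A + feasible_rank F (E - A)"
    using Y A finite_ground by (metis card_Un_disjoint finite_subset Diff_subset)
  then show "card A + feasible_rank F (E - A) \<in> card ` twist F A"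
    using Y(1) by (force simp: twist_def)
qed

lemma width_twist:
  assumes "A \<subseteq> E"
  shows "width (twist F A) = feasible_rank F A + feasible_rank F (E - A)"
proof -
  obtain Y where "Y \<in> F" "Y \<subseteq> A" "card Y = feasible_rank F A"
    using obtain_feasible_subset_of_rank[OF finite_feasible empty_feasible] by blast
  then have "feasible_rank F A \<le> card A"
    using assms finite_ground by (metis card_mono finite_subset)
  then show ?thesis
    unfolding width_def Min_card_twist[OF assms] Max_card_twist[OF assms] by simp
qed

lemma delta_matroid_restrict:
  assumes "S \<subseteq> E"
  shows "delta_matroid S {X \<in> F. X \<subseteq> S}"
  unfolding delta_matroid_def
proof (intro conjI ballI)
  show "finite S" using assms by (rule finite_subset_ground)
  show "{X \<in> F. X \<subseteq> S} \<noteq> {}" using empty_feasible by auto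
next
  fix X Y u assume X: "X \<in> {X \<in> F. X \<subseteq> S}" and Y: "Y \<in> {X \<in> F. X \<subseteq> S}" and u: "u \<in> X \<triangle> Y"
  then obtain v where v: "v \<in> X \<triangle> Y" "X \<triangle> {u, v} \<in> F"
    using dm unfolding delta_matroid_def by blast
  moreover have "X \<triangle> {u, v} \<subseteq> S" using X Y u v(1) by (auto simp: symdiff_def)
  ultimately show "\<exists>v\<in>X \<triangle> Y. X \<triangle> {u, v} \<in> {X \<in> F. X \<subseteq> S}" by blast
qed auto

lemma feasible_rank_empty: "feasible_rank F {} = 0"
  using obtain_feasible_subset_of_rank[OF finite_feasible empty_feasible, of "{}"] by (metis card.empty subset_empty)

lemma twist_poly_single_term_iff:
  "(\<exists>(m::int) k. twist_poly E F = monom m k)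
    \<longleftrightarrow> (\<forall>A\<subseteq>E. feasible_rank F A + feasible_rank F (E - A) = feasible_rank F E)"
proof -
  have "twist_poly E F = (\<Sum>A\<in>Pow E. monom 1 (feasible_rank F A + feasible_rank F (E - A)))"
    unfolding twist_poly_def using width_twist by (intro sum.cong) auto
  then have "(\<exists>(m::int) k. twist_poly E F = monom m k)
      \<longleftrightarrow> (\<exists>k. \<forall>A\<in>Pow E. feasible_rank F A + feasible_rank F (E - A) = k)"
    using sum_monom_eq_monom_iff[of "Pow E"] finite_ground by simp
  also have "\<dots> \<longleftrightarrow> (\<forall>A\<subseteq>E. feasible_rank F A + feasible_rank F (E - A) = feasible_rank F E)"
    using feasible_rank_empty by (metis Diff_empty Pow_iff empty_subsetI add_0)
  finally show ?thesis .
qed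

end

section \<open>Even matrix delta-matroids\<close>

locale even_matrix_dm =
  fixes E :: "'a set" and F :: "'a set set" and C :: "'a \<Rightarrow> 'a \<Rightarrow> bit"
  assumes dm: "delta_matroid E F" and sym: "symmetric_on E C"
    and zero_outside: "\<forall>i j. i \<notin> E \<or> j \<notin> E \<longrightarrow> C i j = 0"
    and feasible_eq: "F = {Z. Z \<subseteq> E \<and> nonsingular C Z}" and even: "even_dm F"
begin

sublocale normal_delta_matroid E F
  using dm feasible_eq nonsingular_empty by unfold_locales auto

lemma feasible_iff: "Z \<in> F \<longleftrightarrow> Z \<subseteq> E \<and> nonsingular C Z"
  using feasible_eq by auto

lemma even_card_feasible: "X \<in> F \<Longrightarrow> even (card X)"
  using even empty_feasible unfolding even_dm_def by (metis Diff_empty Un_empty_right empty_Diff symdiff_def)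

lemma C_sym: "u \<in> E \<Longrightarrow> v \<in> E \<Longrightarrow> C u v = C v u"
  using sym by (simp add: symmetric_on_def)

lemma diag_zero: "v \<in> E \<Longrightarrow> C v v = 0"
  using even_card_feasible[of "{v}"] feasible_iff nonsingular_singleton by fastforce

lemma pair_feasible_iff: "u \<in> E \<Longrightarrow> v \<in> E \<Longrightarrow> u \<noteq> v \<Longrightarrow> {u, v} \<in> F \<longleftrightarrow> C u v \<noteq> 0"
  using feasible_iff nonsingular_pair[of u v C] diag_zero C_sym by auto

lemma feasible_rank_le_card:
  assumes "S \<subseteq> E"
  shows "feasible_rank F S \<le> card S"
proof -
  obtain X where "X \<in> F" "X \<subseteq> S" "card X = feasible_rank F S"
    using obtain_feasible_subset_of_rank[OF finite_feasible empty_feasible] by blast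
  moreover have "finite S" using assms by (rule finite_subset_ground)
  ultimately show ?thesis using card_mono by metis
qed

lemma feasible_rank_mono:
  assumes "S \<subseteq> S'"
  shows "feasible_rank F S \<le> feasible_rank F S'"
proof -
  obtain X where "X \<in> F" "X \<subseteq> S" "card X = feasible_rank F S"
    using obtain_feasible_subset_of_rank[OF finite_feasible empty_feasible] by blast
  then show ?thesis using card_le_feasible_rank[OF finite_feasible, of X S'] assms by simp
qed

lemma feasible_rank_singleton: "feasible_rank F {v} = 0"
proof -
  obtain X where X: "X \<in> F" "X \<subseteq> {v}" "card X = feasible_rank F {v}"
    using obtain_feasible_subset_of_rank[OF finite_feasible empty_feasible] by blast
  have "X \<noteq> {v}" using even_card_feasible X(1) by fastforce
  then have "X = {}" using X(2) by blast
  then show ?thesis using X(3) by simp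
qed

lemma feasible_rank_pair:
  assumes "u \<in> E" "v \<in> E" "u \<noteq> v"
  shows "feasible_rank F {u, v} = (if C u v = 1 then 2 else 0)"
proof -
  obtain X where X: "X \<in> F" "X \<subseteq> {u, v}" "card X = feasible_rank F {u, v}"
    using obtain_feasible_subset_of_rank[OF finite_feasible empty_feasible] by blast
  have "{u} \<notin> F" "{v} \<notin> F" using even_card_feasible by fastforce+
  moreover have "X = {} \<or> X = {u} \<or> X = {v} \<or> X = {u, v}" using X(2) by blast
  ultimately have X_cases: "X = {} \<or> X = {u, v}" using X(1) by blast
  show ?thesis
  proof (cases "C u v = 1")
    case True
    then have "{u, v} \<in> F" using pair_feasible_iff assms by simp
    then have "2 \<le> feasible_rank F {u, v}"
      using card_le_feasible_rank[OF finite_feasible, of "{u, v}" "{u, v}"] assms(3) by simp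
    moreover have "feasible_rank F {u, v} \<le> 2" using feasible_rank_le_card[of "{u, v}"] assms by simp
    ultimately show ?thesis using True by simp
  next
    case False
    then have "{u, v} \<notin> F" using pair_feasible_iff assms by simp
    then have "X = {}" using X(1) X_cases by blast
    then show ?thesis using False X(3) by simp
  qed
qed

text \<open>
  Pivoting on a maximal feasible subset X of T turns the feasible sets between X and T into
  the nonsingular principal submatrices of the pivot indexed by subsets of T - X.
\<close>
lemma pivot_zero_off_maximal:
  assumes X: "X \<in> F" "X \<subseteq> T" and T: "T \<subseteq> E"
    and maximal: "\<And>Z. X \<subset> Z \<Longrightarrow> Z \<subseteq> T \<Longrightarrow> Z \<notin> F"
    and a: "a \<in> T - X" and b: "b \<in> T - X"
  shows "pivot.pivot_matrix E C X a b = 0"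
proof -
  have XE: "X \<subseteq> E" using X T by blast
  interpret q: pivot E C X
    using finite_ground sym XE X(1) feasible_iff by unfold_locales auto
  have infeasible: "\<not> nonsingular q.pivot_matrix Z" if Z: "Z \<subseteq> T - X" "Z \<noteq> {}" for Z
  proof -
    have ZE: "Z \<subseteq> E" using Z T by blast
    obtain z where "z \<in> Z" using Z(2) by blast
    then have "X \<subset> X \<union> Z" using Z(1) by blast
    moreover have "X \<union> Z \<subseteq> T" using Z(1) X(2) by blast
    ultimately have "X \<union> Z \<notin> F" by (rule maximal)
    moreover have "X \<triangle> Z = X \<union> Z" using Z by (auto simp: symdiff_def)
    ultimately have "\<not> nonsingular C (X \<triangle> Z)" using XE ZE feasible_iff by auto
    then show ?thesis using q.nonsingular_pivot_iff[OF ZE] by simp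
  qed
  have diag: "q.pivot_matrix c c = 0" if "c \<in> T - X" for c
    using infeasible[of "{c}"] that by (simp add: nonsingular_singleton)
  show ?thesis
  proof (cases "a = b")
    case True
    then show ?thesis using diag a by simp
  next
    case False
    have "\<not> nonsingular q.pivot_matrix {a, b}" using infeasible[of "{a, b}"] a b by simp
    then show ?thesis
      using nonsingular_pair[of a b q.pivot_matrix] False diag a b q.pivot_matrix_symmetric by simp
  qed
qed

lemma obtain_maximal_feasible_subset:
  obtains X where "X \<in> F" "X \<subseteq> T" "card X = feasible_rank F T"
    "\<And>Z. X \<subset> Z \<Longrightarrow> Z \<subseteq> T \<Longrightarrow> Z \<notin> F"
proof -
  obtain X where X: "X \<in> F" "X \<subseteq> T" "card X = feasible_rank F T"
    using obtain_feasible_subset_of_rank[OF finite_feasible empty_feasible] by blast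
  have "Z \<notin> F" if Z: "X \<subset> Z" "Z \<subseteq> T" for Z
  proof
    assume "Z \<in> F"
    then have "card Z \<le> card X" "finite Z"
      using card_le_feasible_rank[OF finite_feasible _ Z(2)] X(3) feasible_sub finite_subset_ground
      by auto
    then show False using psubset_card_mono[OF _ Z(1)] by simp
  qed
  with X show thesis by (rule that)
qed

lemma kernel_vec_if_feasible_rank_delete:
  assumes T: "T \<subseteq> E" and v: "v \<in> T"
    and rank: "feasible_rank F (T - {v}) = feasible_rank F T"
  shows "\<exists>y. in_kernel C T y \<and> y v = 1"
proof -
  obtain X where X: "X \<in> F" "X \<subseteq> T - {v}" "card X = feasible_rank F (T - {v})"
    using obtain_feasible_subset_of_rank[OF finite_feasible empty_feasible] by blast
  have XT: "X \<subseteq> T" and vX: "v \<notin> X" and XE: "X \<subseteq> E" using X(2) T by auto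
  have maximal: "Z \<notin> F" if "X \<subset> Z" "Z \<subseteq> T" for Z
  proof
    assume "Z \<in> F"
    then have "card Z \<le> card X"
      using card_le_feasible_rank[OF finite_feasible _ that(2)] X(3) rank by simp
    moreover have "finite Z" using that(2) T by (intro finite_subset_ground) blast
    ultimately show False using psubset_card_mono[OF _ that(1)] by simp
  qed
  interpret q: pivot E C X
    using finite_ground sym XE X(1) feasible_iff by unfold_locales auto
  have zero: "q.pivot_matrix i j = 0" if "i \<in> T - X" "j \<in> T - X" for i j
    using pivot_zero_off_maximal[OF X(1) XT T maximal that] .
  have kernel: "in_kernel q.pivot_matrix (X \<triangle> T) (q.unit_vec v)"
  proof -
    have "X \<triangle> T = T - X" using XT by (auto simp: symdiff_def)
    moreover have "supported_on (T - X) (q.unit_vec v)"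
      using v vX by (simp add: supported_on_def q.unit_vec_def)
    moreover have "(\<Sum>j\<in>T - X. q.pivot_matrix i j * q.unit_vec v j) = 0" if "i \<in> T - X" for i
      using zero that by simp
    ultimately show ?thesis by (simp add: in_kernel_def)
  qed
  obtain y where y: "y \<in> q.vecs" "q.pivot_arg y = q.unit_vec v"
    using q.pivot_arg_inv_vecs q.pivot_arg_inv_inverse q.unit_vec_vecs v T by blast
  have "in_kernel C T y" using q.in_kernel_pivot_iff[OF y(1) T] kernel y(2) by simp
  moreover have "y v = 1" using q.pivot_arg_outside[OF vX, of y] y(2) by (simp add: q.unit_vec_def)
  ultimately show ?thesis by blast
qed

lemma feasible_rank_delete_if_kernel_vec:
  assumes T: "T \<subseteq> E" and v: "v \<in> T" and y: "in_kernel C T y" and yv: "y v = 1"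
  shows "feasible_rank F T \<le> feasible_rank F (T - {v})"
proof -
  obtain X where X: "X \<in> F" "X \<subseteq> T" "card X = feasible_rank F T"
    and maximal: "\<And>Z. X \<subset> Z \<Longrightarrow> Z \<subseteq> T \<Longrightarrow> Z \<notin> F"
    by (rule obtain_maximal_feasible_subset[of T]) blast
  have XE: "X \<subseteq> E" using X(2) T by blast
  then have fX: "finite X" by (rule finite_subset_ground)
  show ?thesis
  proof (cases "v \<in> X")
    case False
    then have "X \<subseteq> T - {v}" using X(2) by blast
    then show ?thesis using card_le_feasible_rank[OF finite_feasible X(1)] X(3) by simp
  next
    case vX: True
    interpret q: pivot E C X
      using finite_ground sym XE X(1) feasible_iff by unfold_locales auto
    have "odd (card (X \<triangle> {v}))"
      using even_card_feasible[OF X(1)] vX fX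
      by (auto simp: symdiff_def card_Diff_singleton Un_absorb2 card_gt_0_iff)
    moreover have "X \<triangle> {v} \<subseteq> E" using XE v T by (auto simp: symdiff_def)
    ultimately have "\<not> nonsingular C (X \<triangle> {v})"
      using even_card_feasible feasible_iff by blast
    moreover have vE: "v \<in> E" using v T by blast
    ultimately have vv: "q.pivot_matrix v v = 0"
      using q.nonsingular_pivot_iff[of "{v}"] vE by (simp add: nonsingular_singleton)
    \<comment> \<open>Row v of the pivot, applied to the image of y, gives y v = 1; so it meets T - X.\<close>
    have yV: "y \<in> q.vecs" using q.in_kernel_vecs[OF y T] .
    have XT: "X \<triangle> T = T - X" using X(2) by (auto simp: symdiff_def)
    have k: "in_kernel q.pivot_matrix (T - X) (q.pivot_arg y)"
      using q.in_kernel_pivot_iff[OF yV T] y XT by simp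
    have "(\<Sum>j\<in>E. q.pivot_matrix v j * q.pivot_arg y j) = 1"
      using q.pivot_matrix_mult[OF yV vE] vX yv by (simp add: q.pivot_val_def)
    moreover have "(\<Sum>j\<in>T - X. q.pivot_matrix v j * q.pivot_arg y j)
        = (\<Sum>j\<in>E. q.pivot_matrix v j * q.pivot_arg y j)"
      using k T by (intro sum_supported_on finite_ground) (auto simp: in_kernel_def)
    ultimately have "(\<Sum>j\<in>T - X. q.pivot_matrix v j * q.pivot_arg y j) \<noteq> 0" by simp
    then obtain w where w: "w \<in> T - X" "q.pivot_matrix v w * q.pivot_arg y w \<noteq> 0"
      by (rule sum.not_neutral_contains_not_neutral)
    have vw: "q.pivot_matrix v w \<noteq> 0" using w(2) by auto
    have ww: "q.pivot_matrix w w = 0"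
      using pivot_zero_off_maximal[OF X(1,2) T maximal w(1) w(1)] .
    have wv: "w \<noteq> v" and wE: "w \<in> E" using w(1) vX T by auto
    have "nonsingular q.pivot_matrix {v, w}"
      using nonsingular_pair[of v w q.pivot_matrix] wv vv ww vw q.pivot_matrix_symmetric by simp
    then have "nonsingular C (X \<triangle> {v, w})"
      using q.nonsingular_pivot_iff[of "{v, w}"] vE wE by simp
    moreover have "X \<triangle> {v, w} = insert w (X - {v})" using vX w(1) by (auto simp: symdiff_def)
    moreover have sub: "insert w (X - {v}) \<subseteq> T - {v}" using w(1) X(2) wv by auto
    moreover have "insert w (X - {v}) \<subseteq> E" using w(1) XE wE by blast
    ultimately have "insert w (X - {v}) \<in> F" using feasible_iff by simp
    then have "card (insert w (X - {v})) \<le> feasible_rank F (T - {v})"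
      using card_le_feasible_rank[OF finite_feasible _ sub] by simp
    moreover have "card (insert w (X - {v})) = card X"
    proof -
      have "card X > 0" using vX fX card_gt_0_iff by blast
      moreover have "w \<notin> X - {v}" using w(1) by blast
      ultimately show ?thesis using vX fX by (simp add: card_Diff_singleton)
    qed
    ultimately show ?thesis using X(3) by simp
  qed
qed

lemma feasible_rank_delete_eq_iff:
  assumes "T \<subseteq> E" "v \<in> T"
  shows "feasible_rank F (T - {v}) = feasible_rank F T \<longleftrightarrow> (\<exists>y. in_kernel C T y \<and> y v = 1)"
proof
  assume "feasible_rank F (T - {v}) = feasible_rank F T"
  then show "\<exists>y. in_kernel C T y \<and> y v = 1" by (rule kernel_vec_if_feasible_rank_delete[OF assms])
next
  assume "\<exists>y. in_kernel C T y \<and> y v = 1"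
  then have "feasible_rank F T \<le> feasible_rank F (T - {v})"
    using feasible_rank_delete_if_kernel_vec[OF assms] by blast
  moreover have "feasible_rank F (T - {v}) \<le> feasible_rank F T" by (rule feasible_rank_mono) blast
  ultimately show "feasible_rank F (T - {v}) = feasible_rank F T" by simp
qed

lemma disconnected_if_zero_block:
  assumes E: "E = E1 \<union> E2" "E1 \<inter> E2 = {}" "E1 \<noteq> {}" "E2 \<noteq> {}"
    and zero: "\<forall>i\<in>E1. \<forall>j\<in>E2. C i j = 0"
  shows "disconnected E F"
proof -
  have zero': "\<forall>i\<in>E2. \<forall>j\<in>E1. C i j = 0" using zero C_sym E(1) by fastforce
  have block: "nonsingular C Z \<longleftrightarrow> nonsingular C (Z \<inter> E1) \<and> nonsingular C (Z \<inter> E2)"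
    if "Z \<subseteq> E" for Z
  proof (rule nonsingular_block_iff)
    show "finite Z" using that by (rule finite_subset_ground)
    show "Z = Z \<inter> E1 \<union> Z \<inter> E2" "Z \<inter> E1 \<inter> (Z \<inter> E2) = {}" using that E(1,2) by auto
    show "\<forall>i\<in>Z \<inter> E1. \<forall>j\<in>Z \<inter> E2. C i j = 0" "\<forall>i\<in>Z \<inter> E2. \<forall>j\<in>Z \<inter> E1. C i j = 0"
      using zero zero' by auto
  qed
  define F1 where "F1 = {X \<in> F. X \<subseteq> E1}"
  define F2 where "F2 = {X \<in> F. X \<subseteq> E2}"
  have "F = direct_sum F1 F2"
  proof (intro equalityI subsetI)
    fix Z assume "Z \<in> F"
    then have Z: "Z \<subseteq> E" "nonsingular C Z" using feasible_iff by auto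
    then have "Z \<inter> E1 \<in> F1" "Z \<inter> E2 \<in> F2"
      using block[OF Z(1)] feasible_iff by (auto simp: F1_def F2_def)
    moreover have "Z = (Z \<inter> E1) \<union> (Z \<inter> E2)" using Z(1) E(1) by auto
    ultimately show "Z \<in> direct_sum F1 F2" unfolding direct_sum_def by blast
  next
    fix Z assume "Z \<in> direct_sum F1 F2"
    then obtain X Y where XY: "Z = X \<union> Y" "X \<in> F1" "Y \<in> F2" unfolding direct_sum_def by blast
    then have "X \<subseteq> E1" "Y \<subseteq> E2" "nonsingular C X" "nonsingular C Y"
      using feasible_iff by (auto simp: F1_def F2_def)
    moreover have "Z \<inter> E1 = X" "Z \<inter> E2 = Y" "Z \<subseteq> E"
      using XY(1) calculation(1,2) E(1,2) by auto
    ultimately show "Z \<in> F" using block feasible_iff by auto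
  qed
  moreover have "delta_matroid E1 F1" "delta_matroid E2 F2"
    unfolding F1_def F2_def using delta_matroid_restrict E(1) by auto
  ultimately show ?thesis unfolding disconnected_def using E by blast
qed

context
  assumes rank_sum: "\<And>A. A \<subseteq> E \<Longrightarrow>
    feasible_rank F A + feasible_rank F (E - A) = feasible_rank F E"
begin

lemma feasible_rank_delete_ground: "u \<in> E \<Longrightarrow> feasible_rank F (E - {u}) = feasible_rank F E"
  using rank_sum[of "{u}"] feasible_rank_singleton by simp

lemma kernel_vec_zero_across_edge:
  assumes y: "in_kernel C E y" and uv: "u \<in> E" "v \<in> E" "u \<noteq> v" "C u v = 1" and yu: "y u = 0"
  shows "y v = 0"
proof (rule ccontr)
  assume "y v \<noteq> 0"
  then have yv: "y v = 1" by simp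
  have "in_kernel C (E - {u}) y" by (rule in_kernel_delete[OF finite_ground y yu])
  moreover have "E - {u} \<subseteq> E" "v \<in> E - {u}" using uv by auto
  ultimately have "feasible_rank F (E - {u}) \<le> feasible_rank F (E - {u} - {v})"
    using feasible_rank_delete_if_kernel_vec yv by blast
  moreover have "E - {u} - {v} = E - {u, v}" by blast
  moreover have "feasible_rank F {u, v} + feasible_rank F (E - {u, v}) = feasible_rank F E"
    using rank_sum[of "{u, v}"] uv by simp
  ultimately show False
    using feasible_rank_delete_ground[OF uv(1)] feasible_rank_pair[OF uv(1-3)] uv(4) by simp
qed

lemma kernel_vec_constant:
  assumes con: "connected_dm E F" and y: "in_kernel C E y" and uv: "u \<in> E" "v \<in> E"
  shows "y u = y v"
proof (rule ccontr)
  assume ne: "y u \<noteq> y v"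
  define E1 where "E1 = {i \<in> E. y i = 1}"
  define E2 where "E2 = {i \<in> E. y i = 0}"
  have "E = E1 \<union> E2" "E1 \<inter> E2 = {}" by (auto simp: E1_def E2_def)
  moreover have "E1 \<noteq> {}" "E2 \<noteq> {}"
    using ne uv by (auto simp: E1_def E2_def) (metis bit_not_one_iff)+
  moreover have "\<forall>i\<in>E1. \<forall>j\<in>E2. C i j = 0"
  proof (intro ballI)
    fix i j assume "i \<in> E1" "j \<in> E2"
    then have ij: "j \<noteq> i" "i \<in> E" "j \<in> E" "y j = 0" "y i = 1" by (auto simp: E1_def E2_def)
    have "C j i \<noteq> 1"
    proof
      assume "C j i = 1"
      then have "y i = 0" using kernel_vec_zero_across_edge[OF y] ij by blast
      then show False using ij by simp
    qed
    then show "C i j = 0" using C_sym ij(2,3) by simp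
  qed
  ultimately have "disconnected E F" by (rule disconnected_if_zero_block)
  then show False using con by (simp add: connected_dm_def)
qed

lemma row_sums_zero:
  assumes con: "connected_dm E F" and i: "i \<in> E"
  shows "(\<Sum>j\<in>E. C i j) = 0"
proof -
  obtain y where y: "in_kernel C E y" "y i = 1"
    using feasible_rank_delete_eq_iff[of E i] feasible_rank_delete_ground i by blast
  then have "y j = 1" if "j \<in> E" for j using kernel_vec_constant[OF con y(1) i that] by simp
  then have "(\<Sum>j\<in>E. C i j) = (\<Sum>j\<in>E. C i j * y j)" by simp
  also have "\<dots> = 0" using y(1) i by (simp add: in_kernel_def)
  finally show ?thesis .
qed

lemma complete_if_rank_sum_constant:
  assumes con: "connected_dm E F" and uv: "u \<in> E" "v \<in> E" "u \<noteq> v"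
  shows "C u v = 1"
proof (rule ccontr)
  assume "C u v \<noteq> 1"
  then have "feasible_rank F (E - {u, v}) = feasible_rank F E"
    using rank_sum[of "{u, v}"] feasible_rank_pair[OF uv] uv by simp
  moreover have "E - {u} - {v} = E - {u, v}" by blast
  ultimately have "feasible_rank F (E - {u} - {v}) = feasible_rank F (E - {u})"
    using feasible_rank_delete_ground[OF uv(1)] by simp
  then obtain y where y: "in_kernel C (E - {u}) y" "y v = 1"
    using feasible_rank_delete_eq_iff[of "E - {u}" v] uv by blast
  have "in_kernel C E y"
    using in_kernel_insert_zero_row_sums[OF finite_ground uv(1) _ _ y(1)]
      C_sym row_sums_zero[OF con] by blast
  then have "y u = y v" using kernel_vec_constant[OF con _ uv(1,2)] by blast
  moreover have "y u = 0" using y(1) by (simp add: in_kernel_def supported_on_def)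
  ultimately show False using y(2) by simp
qed

lemma odd_card_if_rank_sum_constant:
  assumes con: "connected_dm E F" and ne: "E \<noteq> {}"
  shows "odd (card E)"
proof -
  obtain u where u: "u \<in> E" using ne by blast
  have "(0::bit) = (\<Sum>j\<in>E. C u j)" using row_sums_zero[OF con u] by simp
  also have "\<dots> = (\<Sum>j\<in>E - {u}. C u j)"
    using u diag_zero[OF u] by (simp add: sum.remove[OF finite_ground u])
  also have "\<dots> = (\<Sum>j\<in>E - {u}. 1)"
    using complete_if_rank_sum_constant[OF con u] by (intro sum.cong) auto
  also have "\<dots> = of_nat (card E - 1)" using u by simp
  finally have "even (card E - 1)" by (simp add: of_nat_bit split: if_splits)
  moreover have "card E > 0" using u finite_ground card_gt_0_iff by blast
  ultimately show ?thesis by simp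
qed

end

context
  assumes complete: "\<forall>u\<in>E. \<forall>v\<in>E. u \<noteq> v \<longrightarrow> C u v = 1"
begin

text \<open>
  For a complete intersection graph, C y = s - y on X with s the sum of y over X; so a
  kernel vector is constant, equal to s, and then s = card X * s vanishes when card X is even.
\<close>
lemma nonsingular_if_even_card:
  assumes X: "X \<subseteq> E" "even (card X)"
  shows "nonsingular C X"
  unfolding nonsingular_def
proof (intro allI impI ext)
  fix y i assume y: "in_kernel C X y"
  have fX: "finite X" using X(1) by (rule finite_subset_ground)
  define s where "s = (\<Sum>j\<in>X. y j)"
  have ys: "y x = s" if x: "x \<in> X" for x
  proof -
    have xE: "x \<in> E" using x X(1) by blast
    have C1: "C x j = 1" if j: "j \<in> X - {x}" for j
    proof -
      have "j \<in> E" "x \<noteq> j" using j X(1) by auto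
      then show ?thesis using complete xE by simp
    qed
    have "0 = (\<Sum>j\<in>X. C x j * y j)" using y x by (simp add: in_kernel_def)
    also have "\<dots> = C x x * y x + (\<Sum>j\<in>X - {x}. C x j * y j)" by (rule sum.remove[OF fX x])
    also have "\<dots> = (\<Sum>j\<in>X - {x}. C x j * y j)" using diag_zero[OF xE] by simp
    also have "\<dots> = (\<Sum>j\<in>X - {x}. y j)" by (rule sum.cong[OF refl]) (simp add: C1)
    finally have rest: "(\<Sum>j\<in>X - {x}. y j) = 0" by simp
    have "s = y x + (\<Sum>j\<in>X - {x}. y j)" unfolding s_def by (rule sum.remove[OF fX x])
    then show ?thesis using rest by simp
  qed
  have "(\<Sum>j\<in>X. y j) = (\<Sum>j\<in>X. s)" using ys by (intro sum.cong) auto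
  then have "s = (\<Sum>j\<in>X. s)" by (simp only: s_def[symmetric])
  also have "\<dots> = 0" using X(2) by (simp add: of_nat_bit)
  finally have "s = 0" .
  then show "y i = 0" using ys y by (cases "i \<in> X") (auto simp: in_kernel_def supported_on_def)
qed

lemma feasible_rank_complete:
  assumes S: "S \<subseteq> E"
  shows "feasible_rank F S = 2 * (card S div 2)"
proof -
  obtain X where X: "X \<in> F" "X \<subseteq> S" "card X = feasible_rank F S"
    using obtain_feasible_subset_of_rank[OF finite_feasible empty_feasible] by blast
  have "card X \<le> card S" using X(2) finite_subset_ground[OF S] by (rule card_mono[rotated])
  moreover have "even (card X)" using even_card_feasible[OF X(1)] .
  moreover obtain Y where Y: "Y \<subseteq> S" "card Y = 2 * (card S div 2)"
    using obtain_subset_with_card_n[of "2 * (card S div 2)" S] by auto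
  then have "Y \<in> F" using nonsingular_if_even_card S feasible_iff by auto
  then have "2 * (card S div 2) \<le> feasible_rank F S"
    using card_le_feasible_rank[OF finite_feasible _ Y(1)] Y(2) by simp
  ultimately show ?thesis using X(3) by presburger
qed

lemma rank_sum_complete_odd:
  assumes odd: "odd (card E)" and A: "A \<subseteq> E"
  shows "feasible_rank F A + feasible_rank F (E - A) = feasible_rank F E"
proof -
  have "card E = card A + card (E - A)"
    using A finite_ground by (metis card_Diff_subset finite_subset le_add_diff_inverse card_mono)
  then show ?thesis using odd A by (simp add: feasible_rank_complete) presburger
qed

end

lemma rank_sum_constant_iff:
  assumes "connected_dm E F" "E \<noteq> {}"
  shows "(\<forall>A\<subseteq>E. feasible_rank F A + feasible_rank F (E - A) = feasible_rank F E)
    \<longleftrightarrow> (\<forall>u\<in>E. \<forall>v\<in>E. u \<noteq> v \<longrightarrow> C u v = 1) \<and> odd (card E)"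
proof
  assume "\<forall>A\<subseteq>E. feasible_rank F A + feasible_rank F (E - A) = feasible_rank F E"
  then have rank_sum: "\<And>A. A \<subseteq> E \<Longrightarrow>
      feasible_rank F A + feasible_rank F (E - A) = feasible_rank F E" by blast
  show "(\<forall>u\<in>E. \<forall>v\<in>E. u \<noteq> v \<longrightarrow> C u v = 1) \<and> odd (card E)"
    using complete_if_rank_sum_constant[OF rank_sum assms(1)]
      odd_card_if_rank_sum_constant[OF rank_sum assms] by blast
next
  assume "(\<forall>u\<in>E. \<forall>v\<in>E. u \<noteq> v \<longrightarrow> C u v = 1) \<and> odd (card E)"
  then show "\<forall>A\<subseteq>E. feasible_rank F A + feasible_rank F (E - A) = feasible_rank F E"
    using rank_sum_complete_odd by simp
qed

lemma repr_matrix_eq: "repr_matrix E F = C"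
  unfolding repr_matrix_def
proof (rule the_equality)
  show "symmetric_on E C \<and> (\<forall>i j. i \<notin> E \<or> j \<notin> E \<longrightarrow> C i j = 0) \<and> F = dm_of_matrix E C"
    using sym zero_outside feasible_eq dm_of_matrix_eq[OF finite_ground] by simp
next
  fix C' assume C': "symmetric_on E C' \<and> (\<forall>i j. i \<notin> E \<or> j \<notin> E \<longrightarrow> C' i j = 0) \<and> F = dm_of_matrix E C'"
  interpret C': even_matrix_dm E F C'
    using dm C' even dm_of_matrix_eq[OF finite_ground] by unfold_locales auto
  show "C' = C"
  proof (intro ext)
    fix i j
    show "C' i j = C i j"
    proof (cases "i \<in> E \<and> j \<in> E")
      case False
      then show ?thesis using C' zero_outside by auto
    next
      case True
      show ?thesis
      proof (cases "i = j")
        case True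
        then show ?thesis using diag_zero C'.diag_zero \<open>i \<in> E \<and> j \<in> E\<close> by simp
      next
        case False
        then have "C' i j \<noteq> 0 \<longleftrightarrow> C i j \<noteq> 0"
          using pair_feasible_iff C'.pair_feasible_iff \<open>i \<in> E \<and> j \<in> E\<close> by blast
        then show ?thesis by (metis bit_not_zero_iff)
      qed
    qed
  qed
qed

lemma ig_complete_odd_iff:
  "ig_complete_odd E F \<longleftrightarrow> (\<forall>u\<in>E. \<forall>v\<in>E. u \<noteq> v \<longrightarrow> C u v = 1) \<and> odd (card E)"
  unfolding ig_complete_odd_def ig_loop_def ig_adj_def repr_matrix_eq using diag_zero by auto

end

theorem mainTheorem9:
  fixes E :: "'a set" and F :: "'a set set"
  assumes "delta_matroid E F" and "connected_dm E F" and "even_dm F"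
    and "normal F" and "binary E F" and "E \<noteq> {}"
  shows "(\<exists>(m::int) (k::nat). twist_poly E F = monom m k) \<longleftrightarrow> ig_complete_odd E F"
proof -
  obtain C where C: "symmetric_on E C" "\<forall>i j. i \<notin> E \<or> j \<notin> E \<longrightarrow> C i j = 0"
    "F = {Z. Z \<subseteq> E \<and> nonsingular C Z}"
    using normal_binary_representation[OF assms(1,4,5)] by blast
  interpret even_matrix_dm E F C using assms(1,3) C by unfold_locales
  have "(\<exists>(m::int) k. twist_poly E F = monom m k)
      \<longleftrightarrow> (\<forall>A\<subseteq>E. feasible_rank F A + feasible_rank F (E - A) = feasible_rank F E)"
    by (rule twist_poly_single_term_iff)
  also have "\<dots> \<longleftrightarrow> (\<forall>u\<in>E. \<forall>v\<in>E. u \<noteq> v \<longrightarrow> C u v = 1) \<and> odd (card E)"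
    by (rule rank_sum_constant_iff[OF assms(2,6)])
  also have "\<dots> \<longleftrightarrow> ig_complete_odd E F" by (rule ig_complete_odd_iff[symmetric])
  finally show ?thesis .
qed

end
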